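(* Let $p\ge0$ be an integer, $n=2p+1$ and $R>0$. Let $D$ be the determinant of the $(p+2)\times(p+2)$ matrix whose rows indexed by $i=0,\dots,p$ are $\bigl(\chi_{p+i},\ \delta\chi_{p+i},\ \delta^2\chi_{p+i},\ \dots,\ \delta^p\chi_{p+i},\ 0\bigr)$ and whose last row is $\bigl(-nR^{n-1},0,\dots,0,n!\bigr)$, all functions evaluated at $R$. Then \[D=n!\,R^{(p+1)p/2}\det[\chi_{i+j}(R)]_{i,j=0}^p.\]
   Context: The reverse Bessel polynomials are $\chi_0=1$, $\chi_1=R$, $\chi_{i+2}=R^2\chi_i+(2i+1)\chi_{i+1}$. The operator $\delta$ on functions of $R>0$ is $\delta f(R)=e^{R}R^{2p}\frac{\mathrm d}{\mathrm dR}\bigl(e^{-R}R^{-2p}f(R)\bigr)$, and $\delta^j$ is its $j$-fold iterate. *)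

theory Defs
  imports "HOL-Analysis.Analysis" "Jordan_Normal_Form.Determinant"
begin

text \<open>Reverse Bessel polynomials, as real functions of R.\<close>
fun chi :: "nat \<Rightarrow> real \<Rightarrow> real" where
  "chi 0 R = 1"
| "chi (Suc 0) R = R"
| "chi (Suc (Suc i)) R = R^2 * chi i R + (2 * real i + 1) * chi (Suc i) R"

definition delta :: "nat \<Rightarrow> (real \<Rightarrow> real) \<Rightarrow> real \<Rightarrow> real" where
  "delta p f = (\<lambda>R. exp R * R ^ (2*p) *
      deriv (\<lambda>x. exp (- x) * inverse (x ^ (2*p)) * f x) R)"

end

theory Submission
  imports Defs
begin

text \<open>Since \<open>chi k' = (1 + 1/R) chi k - R chi (k - 1)\<close>, induction on \<open>j\<close> gives
  \<open>delta^j (chi m) = \<Sum>l\<le>j. c j l * R^(2l - j) * chi (m - l)\<close> with coefficients \<open>c j l\<close>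
  vanishing for \<open>l > j\<close> and \<open>c j j = (-1)^j\<close>. Hence the matrix \<open>[delta^j (chi (p + i))]\<close>
  factors as \<open>H J B\<close>, where \<open>H = [chi (i + j)]\<close> is the Hankel matrix, \<open>J\<close> the
  order-reversing permutation matrix and \<open>B\<close> upper triangular with diagonal \<open>(-1)^k R^k\<close>,
  so its determinant is \<open>R^(p(p+1)/2) det H\<close>. The full determinant follows by expanding along
  the last column, whose only nonzero entry is \<open>n!\<close>.\<close>

lemma has_real_derivative_chi_Suc:
  assumes "x \<noteq> 0"
  shows "(chi (Suc k) has_real_derivative (1 + 1/x) * chi (Suc k) x - x * chi k x) (at x)"
proof (induction k rule: induct_nat_012)
  case 0
  have "chi (Suc 0) = (\<lambda>y. y)" by auto
  then show ?case using assms by (auto intro!: derivative_eq_intros simp: field_simps)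
next
  case 1
  have "chi (Suc (Suc 0)) = (\<lambda>y. y^2 + y)" by auto
  then show ?case using assms
    by (auto intro!: derivative_eq_intros simp: field_simps power2_eq_square)
next
  case (ge2 k)
  have "chi (Suc (Suc (Suc k))) =
      (\<lambda>y. y^2 * chi (Suc k) y + (2 * real (Suc k) + 1) * chi (Suc (Suc k)) y)"
    by (rule ext) simp
  moreover have "chi (Suc (Suc k)) x = x^2 * chi k x + (2 * real k + 1) * chi (Suc k) x"
    by simp
  ultimately show ?case using ge2 assms
    by (auto intro!: derivative_eq_intros simp del: chi.simps simp: field_simps power2_eq_square)
qed

lemma has_real_derivative_inverse_power:
  assumes "x \<noteq> 0"
  shows "((\<lambda>y. inverse (y ^ k)) has_real_derivative - (real k / x) * inverse (x ^ k)) (at x)"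
proof -
  have "((\<lambda>y. inverse (y ^ k)) has_real_derivative
      - (real k * x ^ (k - 1)) * (inverse (x ^ k) * inverse (x ^ k))) (at x)"
    using assms by (auto intro!: derivative_eq_intros)
  also have "- (real k * x ^ (k - 1)) * (inverse (x ^ k) * inverse (x ^ k))
      = - (real k / x) * inverse (x ^ k)"
    using assms by (cases k) (auto simp: field_simps)
  finally show ?thesis .
qed

lemma delta_eq:
  assumes "(f has_real_derivative f') (at x)" and "x \<noteq> 0"
  shows "delta p f x = f' - f x - 2 * real p * f x / x"
proof -
  have exp: "((\<lambda>y. exp (- y)) has_real_derivative - exp (- x)) (at x)"
    by (auto intro!: derivative_eq_intros)
  have "deriv (\<lambda>y. exp (- y) * inverse (y ^ (2*p)) * f y) x
      = (- exp (- x) * inverse (x ^ (2*p)) + - (real (2*p) / x) * inverse (x ^ (2*p)) * exp (- x))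
        * f x + f' * (exp (- x) * inverse (x ^ (2*p)))"
    by (intro DERIV_imp_deriv DERIV_mult exp has_real_derivative_inverse_power assms)
  then show ?thesis
    unfolding delta_def using assms(2) by (simp add: exp_minus field_simps)
qed

lemma delta_cong:
  assumes "\<And>y. y > 0 \<Longrightarrow> f y = g y" and "x > 0"
  shows "delta p f x = delta p g x"
proof -
  have "eventually (\<lambda>y. y \<in> {0<..}) (nhds x)"
    using assms(2) by (intro eventually_nhds_in_open) auto
  then have "eventually (\<lambda>y. exp (- y) * inverse (y ^ (2*p)) * f y
                          = exp (- y) * inverse (y ^ (2*p)) * g y) (nhds x)"
    by eventually_elim (simp add: assms(1))
  then show ?thesis unfolding delta_def by (simp add: deriv_cong_ev)
qed

lemma delta_linear_combination:
  assumes "x \<noteq> 0" and "\<And>i. i \<in> S \<Longrightarrow> (f i has_real_derivative f' i) (at x)"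
  shows "delta p (\<lambda>y. \<Sum>i\<in>S. c i * f i y) x = (\<Sum>i\<in>S. c i * delta p (f i) x)"
proof -
  have "((\<lambda>y. \<Sum>i\<in>S. c i * f i y) has_real_derivative (\<Sum>i\<in>S. c i * f' i)) (at x)"
    using assms(2) by (intro DERIV_sum DERIV_cmult)
  then have "delta p (\<lambda>y. \<Sum>i\<in>S. c i * f i y) x
      = (\<Sum>i\<in>S. c i * (f' i - f i x - 2 * real p * f i x / x))"
    using assms(1)
    by (simp add: delta_eq sum_subtractf sum_distrib_left sum_divide_distrib sum.distrib
        algebra_simps)
  also have "\<dots> = (\<Sum>i\<in>S. c i * delta p (f i) x)"
    by (intro sum.cong refl) (simp add: delta_eq[OF assms(2) assms(1)])
  finally show ?thesis .
qed

text \<open>The recursion for the coefficients is read off from \<open>delta_chi_term\<close>.\<close>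

fun delta_coeff :: "nat \<Rightarrow> nat \<Rightarrow> nat \<Rightarrow> real" where
  "delta_coeff p 0 l = (if l = 0 then 1 else 0)"
| "delta_coeff p (Suc j) 0 = (1 - real j - 2 * real p) * delta_coeff p j 0"
| "delta_coeff p (Suc j) (Suc l) =
     (2 * real (Suc l) - real j + 1 - 2 * real p) * delta_coeff p j (Suc l) - delta_coeff p j l"

definition chi_term :: "nat \<Rightarrow> nat \<Rightarrow> nat \<Rightarrow> real \<Rightarrow> real" where
  "chi_term j m l x = x powi (2 * int l - int j) * chi (m - l) x"

lemma delta_coeff_eq_0: "j < l \<Longrightarrow> delta_coeff p j l = 0"
proof (induction j arbitrary: l)
  case (Suc j)
  then obtain l' where "l = Suc l'" by (cases l) auto
  with Suc show ?case by simp
qed simp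

lemma delta_coeff_diag: "delta_coeff p j j = (-1) ^ j"
  by (induction j) (auto simp: delta_coeff_eq_0)

lemma sum_delta_coeff_Suc:
  "(\<Sum>l\<le>j. delta_coeff p j l * ((2 * real l - real j + 1 - 2 * real p) * a l - a (Suc l)))
   = (\<Sum>l\<le>Suc j. delta_coeff p (Suc j) l * a l)"
proof -
  let ?w = "\<lambda>l. delta_coeff p j l * (2 * real l - real j + 1 - 2 * real p) * a l"
  let ?v = "\<lambda>l. delta_coeff p j l * a (Suc l)"
  have "(\<Sum>l\<le>j. delta_coeff p j l * ((2 * real l - real j + 1 - 2 * real p) * a l - a (Suc l)))
      = (\<Sum>l\<le>j. ?w l) - (\<Sum>l\<le>j. ?v l)"
    unfolding sum_subtractf[symmetric] by (intro sum.cong) (simp_all add: algebra_simps)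
  also have "(\<Sum>l\<le>j. ?w l) = (\<Sum>l\<le>Suc j. ?w l)"
    by (simp add: delta_coeff_eq_0)
  also have "\<dots> = ?w 0 + (\<Sum>l\<le>j. ?w (Suc l))"
    by (rule sum.atMost_Suc_shift)
  also have "?w 0 + (\<Sum>l\<le>j. ?w (Suc l)) - (\<Sum>l\<le>j. ?v l)
      = delta_coeff p (Suc j) 0 * a 0 + (\<Sum>l\<le>j. ?w (Suc l) - ?v l)"
    by (simp add: sum_subtractf sum.distrib algebra_simps)
  also have "\<dots> = delta_coeff p (Suc j) 0 * a 0 + (\<Sum>l\<le>j. delta_coeff p (Suc j) (Suc l) * a (Suc l))"
    by (simp add: algebra_simps sum.distrib)
  also have "\<dots> = (\<Sum>l\<le>Suc j. delta_coeff p (Suc j) l * a l)"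
    by (rule sum.atMost_Suc_shift[symmetric])
  finally show ?thesis .
qed

lemma chi_term_Suc:
  assumes "x \<noteq> 0"
  shows "chi_term (Suc j) m l x = chi_term j m l x / x"
proof -
  have "2 * int l - int (Suc j) = (2 * int l - int j) - 1" by simp
  then show ?thesis
    unfolding chi_term_def by (simp only:) (simp add: power_int_diff assms)
qed

lemma has_real_derivative_chi_term:
  assumes "l < m" and "x \<noteq> 0"
  shows "(chi_term j m l has_real_derivative
           chi_term j m l x + (2 * real l - real j + 1) * chi_term (Suc j) m l x
           - chi_term (Suc j) m (Suc l) x) (at x)"
proof -
  define e where "e = 2 * int l - int j"
  obtain k where k: "m - l = Suc k" "m - Suc l = k"
    using assms(1) by (metis Suc_diff_Suc)
  have "chi_term j m l = (\<lambda>y. y powi e * chi (Suc k) y)"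
    by (rule ext) (simp add: chi_term_def e_def k)
  moreover have "((\<lambda>y. y powi e * chi (Suc k) y) has_real_derivative
      of_int e * x powi (e - 1) * 1 * chi (Suc k) x
      + ((1 + 1/x) * chi (Suc k) x - x * chi k x) * x powi e) (at x)"
    by (intro DERIV_mult DERIV_power_int DERIV_ident has_real_derivative_chi_Suc)
       (simp_all add: assms)
  moreover have "chi_term (Suc j) m l x = x powi e / x * chi (Suc k) x"
    unfolding chi_term_Suc[OF assms(2)] by (simp add: chi_term_def e_def k)
  moreover have "chi_term (Suc j) m (Suc l) x = x powi e * x * chi k x"
  proof -
    have "2 * int (Suc l) - int (Suc j) = e + 1" by (simp add: e_def)
    then show ?thesis
      using assms(2) by (simp add: chi_term_def k power_int_add)
  qed
  moreover have "x powi (e - 1) = x powi e / x"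
    using assms(2) by (simp add: power_int_diff)
  moreover have "real_of_int e = 2 * real l - real j"
    by (simp add: e_def)
  ultimately show ?thesis
    using assms(2) by (auto elim!: DERIV_cong simp: field_simps)
qed

lemma delta_chi_term:
  assumes "l < m" and "x \<noteq> 0"
  shows "delta p (chi_term j m l) x
     = (2 * real l - real j + 1 - 2 * real p) * chi_term (Suc j) m l x - chi_term (Suc j) m (Suc l) x"
  using assms(2)
  by (simp add: delta_eq[OF has_real_derivative_chi_term[OF assms]] chi_term_Suc field_simps)

lemma delta_power_chi:
  assumes "j \<le> m" and "x > 0"
  shows "(delta p ^^ j) (chi m) x = (\<Sum>l\<le>j. delta_coeff p j l * chi_term j m l x)"
  using assms
proof (induction j arbitrary: x)
  case 0
  then show ?case by (simp add: chi_term_def)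
next
  case (Suc j)
  have "(delta p ^^ Suc j) (chi m) x = delta p ((delta p ^^ j) (chi m)) x"
    by simp
  also have "\<dots> = delta p (\<lambda>y. \<Sum>l\<le>j. delta_coeff p j l * chi_term j m l y) x"
    by (rule delta_cong) (use Suc in auto)
  also have "\<dots> = (\<Sum>l\<le>j. delta_coeff p j l * delta p (chi_term j m l) x)"
    by (rule delta_linear_combination) (use Suc in \<open>auto intro: has_real_derivative_chi_term\<close>)
  also have "\<dots> = (\<Sum>l\<le>j. delta_coeff p j l * ((2 * real l - real j + 1 - 2 * real p)
                    * chi_term (Suc j) m l x - chi_term (Suc j) m (Suc l) x))"
    using Suc by (intro sum.cong refl) (simp add: delta_chi_term)
  also have "\<dots> = (\<Sum>l\<le>Suc j. delta_coeff p (Suc j) l * chi_term (Suc j) m l x)"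
    by (rule sum_delta_coeff_Suc)
  finally show ?case .
qed

lemma det_last_col_zero:
  fixes A :: "'a :: comm_ring_1 mat"
  assumes A: "A \<in> carrier_mat (Suc n) (Suc n)" and zero: "\<And>i. i < n \<Longrightarrow> A $$ (i, n) = 0"
  shows "det A = A $$ (n, n) * det (mat_delete A n n)"
proof -
  have "det A = (\<Sum>i<Suc n. A $$ (i, n) * cofactor A i n)"
    by (rule laplace_expansion_column[OF A]) simp
  also have "\<dots> = A $$ (n, n) * cofactor A n n"
    by (simp add: zero)
  finally show ?thesis by (simp add: cofactor_def)
qed

lemma det_reversal_mat:
  "det (mat n n (\<lambda>(i,j). if i + j = n - 1 then 1 else 0) :: 'a :: comm_ring_1 mat)
   = (\<Prod>k<n. (-1) ^ k)"
proof (induction n)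
  case 0
  then show ?case by (simp add: det_dim_zero)
next
  case (Suc n)
  let ?J = "mat (Suc n) (Suc n) (\<lambda>(i,j). if i + j = n then 1 else 0) :: 'a mat"
  have "det ?J = (\<Sum>i<Suc n. ?J $$ (i,0) * cofactor ?J i 0)"
    by (rule laplace_expansion_column) auto
  also have "\<dots> = cofactor ?J n 0"
    by (subst sum.lessThan_Suc) (auto intro!: sum.neutral)
  also have "mat_delete ?J n 0 = mat n n (\<lambda>(i,j). if i + j = n - 1 then 1 else 0)"
    by (rule eq_matI) (auto simp: mat_delete_def)
  then have "cofactor ?J n 0 = (-1) ^ n * (\<Prod>k<n. (-1) ^ k)"
    using Suc.IH by (simp add: cofactor_def)
  finally show ?case by simp
qed

lemma hankel_mult_reversal_mat:
  fixes f :: "nat \<Rightarrow> 'a :: semiring_1"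
  shows "mat n n (\<lambda>(i,j). f (i + j)) * mat n n (\<lambda>(i,j). if i + j = n - 1 then 1 else 0)
       = mat n n (\<lambda>(i,l). f (i + (n - 1 - l)))"
proof (rule eq_matI)
  fix i l assume "i < dim_row (mat n n (\<lambda>(i,l). f (i + (n - 1 - l))))"
    and l: "l < dim_col (mat n n (\<lambda>(i,l). f (i + (n - 1 - l))))"
  then have "(mat n n (\<lambda>(i,j). f (i + j)) * mat n n (\<lambda>(i,j). if i + j = n - 1 then 1 else 0)) $$ (i,l)
      = (\<Sum>k\<in>{..<n}. f (i + k) * (if k + l = n - 1 then 1 else 0))"
    by (simp add: scalar_prod_def atLeast0LessThan)
  also have "\<dots> = (\<Sum>k\<in>{n - 1 - l}. f (i + k))"
    using l by (intro sum.mono_neutral_cong_right) auto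
  finally show "(mat n n (\<lambda>(i,j). f (i + j)) * mat n n (\<lambda>(i,j). if i + j = n - 1 then 1 else 0)) $$ (i,l)
      = mat n n (\<lambda>(i,l). f (i + (n - 1 - l))) $$ (i,l)"
    using \<open>i < _\<close> l by simp
qed auto

lemma det_delta_power_chi_mat:
  assumes R: "R > 0"
  shows "det (mat (Suc q) (Suc q) (\<lambda>(i,j). (delta p ^^ j) (chi (q + i)) R))
       = R ^ (Suc q * q div 2) * det (mat (Suc q) (Suc q) (\<lambda>(i,j). chi (i + j) R))"
proof -
  define N where "N = Suc q"
  define H where "H = mat N N (\<lambda>(i,j). chi (i + j) R)"
  define J :: "real mat" where "J = mat N N (\<lambda>(i,j). if i + j = N - 1 then 1 else 0)"
  define B where "B = mat N N (\<lambda>(l,j).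
    if l \<le> j then delta_coeff p j l * R powi (2 * int l - int j) else 0)"
  have HJ: "H * J = mat N N (\<lambda>(i,l). chi (i + (q - l)) R)"
    using hankel_mult_reversal_mat[of N "\<lambda>k. chi k R"] by (simp add: H_def J_def N_def)
  have HJB: "H * J * B = mat N N (\<lambda>(i,j). (delta p ^^ j) (chi (q + i)) R)"
  proof (rule eq_matI)
    fix i j assume i: "i < dim_row (mat N N (\<lambda>(i,j). (delta p ^^ j) (chi (q + i)) R))"
      and j: "j < dim_col (mat N N (\<lambda>(i,j). (delta p ^^ j) (chi (q + i)) R))"
    then have "(H * J * B) $$ (i,j) = (\<Sum>l<N. chi (i + (q - l)) R * B $$ (l, j))"
      unfolding HJ by (simp add: scalar_prod_def atLeast0LessThan B_def)
    also have "\<dots> = (\<Sum>l\<le>j. delta_coeff p j l * chi_term j (q + i) l R)"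
      using j by (intro sum.mono_neutral_cong_right)
        (auto simp: B_def N_def chi_term_def add.commute)
    also have "\<dots> = (delta p ^^ j) (chi (q + i)) R"
      using j R by (simp add: delta_power_chi N_def)
    finally show "(H * J * B) $$ (i,j) = mat N N (\<lambda>(i,j). (delta p ^^ j) (chi (q + i)) R) $$ (i,j)"
      using i j by simp
  qed (auto simp: H_def B_def)
  have det_B: "det B = (\<Prod>k<N. (-1) ^ k * R ^ k)"
  proof -
    have "det B = (\<Prod>k<N. B $$ (k,k))"
      by (subst det_upper_triangular) (auto simp: B_def prod_list_diag_prod atLeast0LessThan)
    then show ?thesis
      by (simp add: B_def delta_coeff_diag power_int_def)
  qed
  have "(\<Prod>k<N. (-1) ^ k) * det B = (\<Prod>k<N. R ^ k :: real)"
    unfolding det_B prod.distrib[symmetric] by (intro prod.cong) (simp_all flip: power_add)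
  also have "\<dots> = R ^ (\<Sum>k<N. k)"
    by (simp add: power_sum)
  also have "(\<Sum>k<N. k) = Suc q * q div 2"
    using gauss_sum_nat[of q] by (simp add: N_def atLeast0AtMost lessThan_Suc_atMost mult.commute)
  finally have "det J * det B = R ^ (Suc q * q div 2)"
    unfolding J_def det_reversal_mat .
  moreover have "H \<in> carrier_mat N N" "J \<in> carrier_mat N N" "B \<in> carrier_mat N N"
    by (simp_all add: H_def J_def B_def)
  ultimately show ?thesis
    unfolding HJB[symmetric] N_def[symmetric] H_def[symmetric]
    by (simp add: det_mult[of _ N] mult.assoc)
qed

theorem lemma5p2:
  fixes p :: nat and n :: nat and R :: real
  assumes "n = 2*p + 1" and "R > 0"
  shows "det (mat (p+2) (p+2) (\<lambda>(i,j).
            if i \<le> p then (if j \<le> p then (delta p ^^ j) (chi (p+i)) R else 0)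
            else (if j = 0 then - real n * R ^ (n-1)
                  else if j = p+1 then fact n else 0)))
       = fact n * R ^ ((p+1)*p div 2) * det (mat (p+1) (p+1) (\<lambda>(i,j). chi (i+j) R))"
proof -
  let ?G = "mat (p+2) (p+2) (\<lambda>(i,j).
            if i \<le> p then (if j \<le> p then (delta p ^^ j) (chi (p+i)) R else 0)
            else (if j = 0 then - real n * R ^ (n-1)
                  else if j = p+1 then fact n else (0::real)))"
  have "det ?G = ?G $$ (Suc p, Suc p) * det (mat_delete ?G (Suc p) (Suc p))"
    by (rule det_last_col_zero) auto
  also have "mat_delete ?G (Suc p) (Suc p)
      = mat (Suc p) (Suc p) (\<lambda>(i,j). (delta p ^^ j) (chi (p + i)) R)"
    by (rule eq_matI) (auto simp: mat_delete_def)
  finally show ?thesis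
    using det_delta_power_chi_mat[OF assms(2), of p p] by simp
qed

end
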